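(* Let $\Omega\subseteq\mathbb{R}^2$ be a compact domain, $r_d>0$, $a_I>0$, $a_h>0$, $a_v>0$, and let $c_r>0$ be a collision radius. Consider $N$ vehicles with dynamics $\dot p_i=v_i$, $\dot v_i=u_i$ and control law (applied without thresholding) $$u_i=-\sum_{j\neq i}\nabla_i V_I(p_{ij})-\nabla_i V_h(p_i)-a_v v_i.$$ Let $$\Phi=\frac12\sum_{i=1}^N\Bigl(\dot p_i\cdot\dot p_i+\sum_{j\ne i}V_I(p_{ij})+2V_h(p_i)\Bigr).$$ If the initial configuration satisfies $$\Phi(0)<\int_{r_d}^{c_r}f_I(s)\,ds=\frac{a_I}{2}(c_r-r_d)^2,$$ then no vehicle collision occurs for any $t\ge0$, i.e., $\|p_i(t)-p_j(t)\|>c_r$ for all $i\neq j$ and all $t\ge 0$.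
   Context: $p_{ij}:=p_i-p_j$; $P_{\partial\Omega}(x)$ is the closest point of $\partial\Omega$ to $x$ and the signed distance of $x$ from $\partial\Omega$ is positive outside $\Omega$, negative inside. $f_I(r)=a_I(r-r_d)$ for $0\le r<r_d$ and $f_I(r)=0$ for $r\ge r_d$. $V_I(x)=\frac{a_I}{2}(\|x\|-r_d)^2$ for $\|x\|<r_d$, $V_I(x)=0$ otherwise; $V_h(x)=0$ if the signed distance of $x$ to $\partial\Omega$ is $\le -\frac{r_d}{2}$ and $V_h(x)=\frac{a_h}{2}(\text{signed distance}+\frac{r_d}{2})^2$ otherwise. A collision between vehicles $i$ and $j$ means $\|p_i-p_j\|\le c_r$. *)

theory Defs
  imports "HOL-Analysis.Analysis"
begin

type_synonym vec2 = "real ^ 2"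

definition fI :: "real \<Rightarrow> real \<Rightarrow> real \<Rightarrow> real" where
  "fI aI rd r = (if r < rd then aI * (r - rd) else 0)"

definition VI :: "real \<Rightarrow> real \<Rightarrow> vec2 \<Rightarrow> real" where
  "VI aI rd x = (if norm x < rd then aI / 2 * (norm x - rd)^2 else 0)"

text \<open>Gradient of V_I (for x \<noteq> 0): f_I(norm x) times the unit vector x / norm x.\<close>
definition gradVI :: "real \<Rightarrow> real \<Rightarrow> vec2 \<Rightarrow> vec2" where
  "gradVI aI rd x = (fI aI rd (norm x) / norm x) *\<^sub>R x"

definition signed_dist :: "vec2 set \<Rightarrow> vec2 \<Rightarrow> real" where
  "signed_dist \<Omega> x = (if x \<in> \<Omega> then - infdist x (frontier \<Omega>) else infdist x (frontier \<Omega>))"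

definition Vh :: "vec2 set \<Rightarrow> real \<Rightarrow> real \<Rightarrow> vec2 \<Rightarrow> real" where
  "Vh \<Omega> ah rd x = (if signed_dist \<Omega> x \<le> - rd / 2 then 0
                     else ah / 2 * (signed_dist \<Omega> x + rd / 2)^2)"

definition Phi :: "nat \<Rightarrow> vec2 set \<Rightarrow> real \<Rightarrow> real \<Rightarrow> real \<Rightarrow>
    (nat \<Rightarrow> real \<Rightarrow> vec2) \<Rightarrow> (nat \<Rightarrow> real \<Rightarrow> vec2) \<Rightarrow> real \<Rightarrow> real" where
  "Phi N \<Omega> rd aI ah p v t = 1/2 * (\<Sum>i<N. v i t \<bullet> v i t
      + (\<Sum>j\<in>{..<N} - {i}. VI aI rd (p i t - p j t)) + 2 * Vh \<Omega> ah rd (p i t))"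

end

theory Submission
  imports Defs
begin

(* The energy Phi is a Lyapunov function of the closed loop: as long as no two vehicles
   coincide, its derivative is -a_v * sum |v_i|^2, because the control cancels the
   potential terms and the pairwise forces grad V_I(p_ij) are antisymmetric in (i, j).
   Before the first time t0 at which some pair comes within c_r all vehicles are distinct,
   so Phi(t0) <= Phi(0) < a_I/2 * min(c_r - r_d, 0)^2. At t0 the colliding pair alone
   contributes V_I(p_ij(t0)) to Phi, which is at least that much because V_I is radially
   nonincreasing. *)

definition VI_profile :: "real \<Rightarrow> real \<Rightarrow> real \<Rightarrow> real" where
  "VI_profile aI rd r = aI / 2 * (min (r - rd) 0)^2"

lemma fI_eq_min: "fI aI rd r = aI * min (r - rd) 0"
  by (simp add: fI_def min_def)

lemma VI_eq_profile_norm: "VI aI rd x = VI_profile aI rd (norm x)"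
  by (simp add: VI_def VI_profile_def min_def)

lemma VI_profile_nonneg: "0 \<le> aI \<Longrightarrow> 0 \<le> VI_profile aI rd r"
  by (simp add: VI_profile_def)

lemma VI_nonneg: "0 \<le> aI \<Longrightarrow> 0 \<le> VI aI rd x"
  by (simp add: VI_eq_profile_norm VI_profile_nonneg)

lemma VI_profile_antimono:
  assumes "0 \<le> aI" and "r \<le> s"
  shows "VI_profile aI rd s \<le> VI_profile aI rd r"
proof -
  have "(- min (s - rd) 0)^2 \<le> (- min (r - rd) 0)^2"
    by (rule power_mono) (use assms(2) in \<open>auto simp: min_def\<close>)
  then show ?thesis
    unfolding VI_profile_def using assms(1) by (simp add: mult_left_mono)
qed

lemma has_real_derivative_min_0_squared:
  "((\<lambda>x::real. (min x 0)^2) has_real_derivative 2 * min s 0) (at s)"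
proof (cases "s = 0")
  case True
  have "\<forall>z. (min z 0)^2 - (min s 0)^2 = min z 0 * (z - s)"
    using True by (auto simp: power2_eq_square min_def)
  then show ?thesis
    using True by (auto simp: CARAT_DERIV intro!: exI[of _ "\<lambda>z. min z 0"] continuous_intros)
next
  case False
  then consider "s < 0" | "s > 0" by linarith
  then show ?thesis
  proof cases
    case 1
    have "((\<lambda>x. x^2) has_real_derivative 2 * min s 0) (at s)"
      using 1 by (auto intro!: derivative_eq_intros)
    then show ?thesis
      by (rule has_field_derivative_transform_within_open[where S="{..<0}"]) (use 1 in auto)
  next
    case 2
    have "((\<lambda>x. 0) has_real_derivative 2 * min s 0) (at s)"
      using 2 by (auto intro!: derivative_eq_intros)
    then show ?thesis
      by (rule has_field_derivative_transform_within_open[where S="{0<..}"]) (use 2 in auto)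
  qed
qed

lemma VI_profile_has_real_derivative:
  "(VI_profile aI rd has_real_derivative fI aI rd r) (at r)"
proof -
  have "((\<lambda>r. aI / 2 * (min (r - rd) 0)^2) has_real_derivative aI / 2 * (2 * min (r - rd) 0 * 1)) (at r)"
    by (intro DERIV_cmult DERIV_chain2[OF has_real_derivative_min_0_squared])
      (auto intro!: derivative_eq_intros)
  then show ?thesis
    by (simp add: VI_profile_def[abs_def] fI_eq_min)
qed

lemma interval_integral_fI:
  "(LBINT s=ereal a..ereal b. fI aI rd s) = VI_profile aI rd b - VI_profile aI rd a"
proof (rule interval_integral_FTC_finite)
  show "continuous_on {min a b..max a b} (fI aI rd)"
    unfolding fI_eq_min[abs_def] by (intro continuous_intros)
  show "(VI_profile aI rd has_vector_derivative fI aI rd r) (at r within {min a b..max a b})" for r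
    using VI_profile_has_real_derivative
    by (simp add: has_real_derivative_iff_has_vector_derivative[symmetric] has_field_derivative_at_within)
qed

lemma VI_has_derivative:
  assumes "x \<noteq> 0"
  shows "(VI aI rd has_derivative (\<lambda>h. gradVI aI rd x \<bullet> h)) (at x)"
proof -
  have "((\<lambda>x. VI_profile aI rd (norm x)) has_derivative (\<lambda>h. fI aI rd (norm x) * (h \<bullet> sgn x))) (at x)"
    using has_derivative_compose[OF has_derivative_norm[OF assms]
        VI_profile_has_real_derivative[unfolded has_field_derivative_def]]
    by (simp add: mult.commute)
  moreover have "(\<lambda>h. fI aI rd (norm x) * (h \<bullet> sgn x)) = (\<lambda>h. gradVI aI rd x \<bullet> h)"
    by (auto simp: gradVI_def sgn_div_norm inner_commute divide_inverse mult_ac)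
  ultimately show ?thesis
    by (simp add: VI_eq_profile_norm[abs_def])
qed

lemma gradVI_minus: "gradVI aI rd (- x) = - gradVI aI rd x"
  by (simp add: gradVI_def)

lemma continuous_on_VI: "continuous_on A (VI aI rd)"
  unfolding VI_eq_profile_norm[abs_def] VI_profile_def by (intro continuous_intros)

lemma Vh_nonneg: "0 \<le> ah \<Longrightarrow> 0 \<le> Vh \<Omega> ah rd x"
  by (simp add: Vh_def)

lemma has_real_derivative_compose_gradient:
  fixes x :: "real \<Rightarrow> 'a::real_inner"
  assumes "(x has_vector_derivative x') (at t within S)"
    and "(f has_derivative (\<lambda>y. g \<bullet> y)) (at (x t))"
  shows "((\<lambda>s. f (x s)) has_real_derivative g \<bullet> x') (at t within S)"
  unfolding has_field_derivative_def
  using has_derivative_compose[OF assms(1)[unfolded has_vector_derivative_def] assms(2)]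
  by (rule has_derivative_eq_rhs) (auto simp: mult.commute)

lemma sum_pairs_antisym:
  fixes g :: "'i \<Rightarrow> 'i \<Rightarrow> 'a::real_inner"
  assumes "finite I" and antisym: "\<And>i j. g j i = - g i j"
  shows "(\<Sum>i\<in>I. \<Sum>j\<in>I - {i}. g i j \<bullet> w j) = - (\<Sum>i\<in>I. \<Sum>j\<in>I - {i}. g i j \<bullet> w i)"
proof -
  have "(\<Sum>i\<in>I. \<Sum>j\<in>I - {i}. g i j \<bullet> w j) = (\<Sum>i\<in>I. \<Sum>j\<in>{j. j \<in> I \<and> i \<noteq> j}. g i j \<bullet> w j)"
    by (intro sum.cong) auto
  also have "\<dots> = (\<Sum>j\<in>I. \<Sum>i\<in>{i. i \<in> I \<and> i \<noteq> j}. g i j \<bullet> w j)"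
    by (rule sum.swap_restrict[OF assms(1) assms(1)])
  also have "\<dots> = (\<Sum>j\<in>I. \<Sum>i\<in>I - {j}. - (g j i \<bullet> w j))"
    by (intro sum.cong) (auto, metis antisym inner_minus_left)
  finally show ?thesis
    by (simp add: sum_negf)
qed

lemma has_real_derivative_inner_self:
  fixes x :: "real \<Rightarrow> 'a::real_inner"
  assumes "(x has_vector_derivative x') (at t within S)"
  shows "((\<lambda>s. x s \<bullet> x s) has_real_derivative 2 * (x t \<bullet> x')) (at t within S)"
  unfolding has_field_derivative_def
  using has_derivative_inner[OF assms[unfolded has_vector_derivative_def] assms[unfolded has_vector_derivative_def]]
  by (rule has_derivative_eq_rhs) (auto simp: inner_commute algebra_simps)

lemma Phi_has_real_derivative:
  fixes p v :: "nat \<Rightarrow> real \<Rightarrow> vec2" and gh dv :: "nat \<Rightarrow> vec2"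
  assumes grad_h: "\<And>i. i < N \<Longrightarrow> (Vh \<Omega> ah rd has_derivative (\<lambda>h. gh i \<bullet> h)) (at (p i t))"
    and pos: "\<And>i. i < N \<Longrightarrow> (p i has_vector_derivative v i t) (at t within S)"
    and vel: "\<And>i. i < N \<Longrightarrow> (v i has_vector_derivative dv i) (at t within S)"
    and distinct: "\<And>i j. i < N \<Longrightarrow> j < N \<Longrightarrow> i \<noteq> j \<Longrightarrow> p i t \<noteq> p j t"
  shows "((\<lambda>s. Phi N \<Omega> rd aI ah p v s) has_real_derivative
      1/2 * (\<Sum>i<N. 2 * (v i t \<bullet> dv i)
        + (\<Sum>j\<in>{..<N} - {i}. gradVI aI rd (p i t - p j t) \<bullet> (v i t - v j t))
        + 2 * (gh i \<bullet> v i t))) (at t within S)"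
proof -
  have pair: "((\<lambda>s. VI aI rd (p i s - p j s)) has_real_derivative
      gradVI aI rd (p i t - p j t) \<bullet> (v i t - v j t)) (at t within S)"
    if "i < N" "j \<in> {..<N} - {i}" for i j
  proof (rule has_real_derivative_compose_gradient[OF _ VI_has_derivative])
    show "((\<lambda>s. p i s - p j s) has_vector_derivative v i t - v j t) (at t within S)"
      using that by (intro has_vector_derivative_diff pos) auto
    show "p i t - p j t \<noteq> 0"
      using that distinct by auto
  qed
  have wall: "((\<lambda>s. Vh \<Omega> ah rd (p i s)) has_real_derivative gh i \<bullet> v i t) (at t within S)"
    if "i < N" for i
    using that by (intro has_real_derivative_compose_gradient pos grad_h)
  show ?thesis
    unfolding Phi_def
    by (intro DERIV_cmult DERIV_sum DERIV_add has_real_derivative_inner_self vel pair wall) auto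
qed

lemma energy_rate_antisym:
  fixes g :: "'i \<Rightarrow> 'i \<Rightarrow> 'a::real_inner"
  assumes "finite I" and antisym: "\<And>i j. g j i = - g i j"
  shows "1/2 * (\<Sum>i\<in>I. 2 * (v i \<bullet> (- (\<Sum>j\<in>I - {i}. g i j) - gh i - av *\<^sub>R v i))
        + (\<Sum>j\<in>I - {i}. g i j \<bullet> (v i - v j)) + 2 * (gh i \<bullet> v i))
    = - av * (\<Sum>i\<in>I. v i \<bullet> v i)"
proof -
  let ?A = "\<lambda>i. \<Sum>j\<in>I - {i}. g i j \<bullet> v i" and ?B = "\<lambda>i. \<Sum>j\<in>I - {i}. g i j \<bullet> v j"
  have rate_i: "2 * (v i \<bullet> (- (\<Sum>j\<in>I - {i}. g i j) - gh i - av *\<^sub>R v i))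
        + (\<Sum>j\<in>I - {i}. g i j \<bullet> (v i - v j)) + 2 * (gh i \<bullet> v i)
      = - ?A i - ?B i - 2 * av * (v i \<bullet> v i)" for i
    by (simp add: inner_diff_right inner_sum_right inner_sum_left sum_subtractf
        inner_commute algebra_simps)
  have "sum ?B I = - sum ?A I"
    using sum_pairs_antisym[where g=g and w=v] assms by blast
  then show ?thesis
    by (simp only: rate_i sum_subtractf sum_negf sum_distrib_left[symmetric]) simp
qed

lemma VI_le_Phi:
  assumes "0 \<le> aI" "0 \<le> ah" "i < N" "j < N" "i \<noteq> j"
  shows "VI aI rd (p i t - p j t) \<le> Phi N \<Omega> rd aI ah p v t"
proof -
  define E where "E k = v k t \<bullet> v k t + (\<Sum>l\<in>{..<N} - {k}. VI aI rd (p k t - p l t))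
    + 2 * Vh \<Omega> ah rd (p k t)" for k
  have E_ge: "VI aI rd (p k t - p l t) \<le> E k" if "l \<in> {..<N} - {k}" for k l
  proof -
    have "VI aI rd (p k t - p l t) \<le> (\<Sum>l\<in>{..<N} - {k}. VI aI rd (p k t - p l t))"
      using that VI_nonneg[OF assms(1)] by (intro member_le_sum) auto
    then show ?thesis
      unfolding E_def using Vh_nonneg[OF assms(2)] by (smt (verit) inner_ge_zero)
  qed
  have E_nonneg: "0 \<le> E k" for k
    unfolding E_def using VI_nonneg[OF assms(1)] Vh_nonneg[OF assms(2)]
    by (intro add_nonneg_nonneg sum_nonneg) auto
  \<comment> \<open>The pair occurs in both E i and E j, which compensates the factor 1/2 in Phi.\<close>
  have "E i + E j \<le> sum E {..<N}"
    using sum_mono2[of "{..<N}" "{i, j}" E] assms E_nonneg by auto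
  moreover have "VI aI rd (p i t - p j t) = VI aI rd (p j t - p i t)"
    by (simp add: VI_def norm_minus_commute)
  ultimately show ?thesis
    unfolding Phi_def E_def[symmetric] using E_ge[of j i] E_ge[of i j] assms by auto
qed

lemma first_collision_time:
  fixes p :: "nat \<Rightarrow> real \<Rightarrow> 'a::real_normed_vector"
  assumes cont: "\<And>i. i < N \<Longrightarrow> continuous_on {0..} (p i)"
    and "0 \<le> t" "i < N" "j < N" "i \<noteq> j" "norm (p i t - p j t) \<le> c"
  obtains t0 i0 j0 where "0 \<le> t0" "i0 < N" "j0 < N" "i0 \<noteq> j0" "norm (p i0 t0 - p j0 t0) \<le> c"
    and "\<And>s k l. 0 \<le> s \<Longrightarrow> s < t0 \<Longrightarrow> k < N \<Longrightarrow> l < N \<Longrightarrow> k \<noteq> l \<Longrightarrow> c < norm (p k s - p l s)"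
proof -
  define D where "D = {s \<in> {0..}. \<exists>k<N. \<exists>l<N. k \<noteq> l \<and> norm (p k s - p l s) \<le> c}"
  have "D = (\<Union>k<N. \<Union>l\<in>{..<N} - {k}. {0..} \<inter> (\<lambda>s. p k s - p l s) -` cball 0 c)"
    unfolding D_def by (auto simp: mem_cball_0) blast+
  also have "closed \<dots>"
    by (intro closed_UN finite_lessThan finite_Diff ballI continuous_closed_preimage
        closed_atLeast closed_cball continuous_intros cont) auto
  finally have "closed D" .
  moreover have "D \<noteq> {}" and bdd: "bdd_below D"
    using assms unfolding D_def by (auto intro: bdd_belowI[of _ 0])
  ultimately have "Inf D \<in> D"
    using closed_contains_Inf by blast
  then obtain i0 j0 where "0 \<le> Inf D" "i0 < N" "j0 < N" "i0 \<noteq> j0"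
      "norm (p i0 (Inf D) - p j0 (Inf D)) \<le> c"
    unfolding D_def by auto
  moreover have "c < norm (p k s - p l s)"
    if "0 \<le> s" "s < Inf D" "k < N" "l < N" "k \<noteq> l" for s k l
  proof (rule ccontr)
    assume "\<not> c < norm (p k s - p l s)"
    then have "s \<in> D"
      using that unfolding D_def by (auto simp: not_less)
    then have "Inf D \<le> s"
      using bdd by (rule cInf_lower)
    with that show False
      by simp
  qed
  ultimately show thesis
    by (rule that)
qed

locale damped_swarm =
  fixes \<Omega> :: "vec2 set" and rd aI ah av :: real and N :: nat
    and p v gh :: "nat \<Rightarrow> real \<Rightarrow> vec2"
  assumes grad_h: "\<And>i t. i < N \<Longrightarrow> t \<ge> 0 \<Longrightarrow>
        (Vh \<Omega> ah rd has_derivative (\<lambda>h. gh i t \<bullet> h)) (at (p i t))"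
    and pos: "\<And>i t. i < N \<Longrightarrow> t \<ge> 0 \<Longrightarrow>
        (p i has_vector_derivative v i t) (at t within {0..})"
    and vel: "\<And>i t. i < N \<Longrightarrow> t \<ge> 0 \<Longrightarrow>
        (v i has_vector_derivative
           (- (\<Sum>j\<in>{..<N} - {i}. gradVI aI rd (p i t - p j t)) - gh i t - av *\<^sub>R v i t))
        (at t within {0..})"
begin

lemma continuous_on_position: "i < N \<Longrightarrow> continuous_on {0..} (p i)"
  using pos by (auto simp: continuous_on_eq_continuous_within intro: has_vector_derivative_continuous)

lemma continuous_on_Phi: "continuous_on {0..} (Phi N \<Omega> rd aI ah p v)"
proof -
  have velocity: "continuous_on {0..} (v i)" if "i < N" for i
    using vel that by (auto simp: continuous_on_eq_continuous_within intro: has_vector_derivative_continuous)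
  have wall: "continuous_on {0..} (\<lambda>s. Vh \<Omega> ah rd (p i s))" if "i < N" for i
    unfolding continuous_on_eq_continuous_within
  proof
    fix t :: real
    assume "t \<in> {0..}"
    then have "isCont (Vh \<Omega> ah rd) (p i t)"
      using has_derivative_continuous[OF grad_h[OF that]] by auto
    moreover have "continuous (at t within {0..}) (p i)"
      using continuous_on_position[OF that] \<open>t \<in> {0..}\<close> by (simp add: continuous_on_eq_continuous_within)
    ultimately show "continuous (at t within {0..}) (\<lambda>s. Vh \<Omega> ah rd (p i s))"
      by (rule continuous_within_compose3)
  qed
  show ?thesis
    unfolding Phi_def
    by (intro continuous_intros continuous_on_sum velocity wall
        continuous_on_compose2[OF continuous_on_VI] continuous_on_position) auto
qed

lemma Phi_has_real_derivative_dissipation: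
  assumes "0 \<le> t" and distinct: "\<And>i j. i < N \<Longrightarrow> j < N \<Longrightarrow> i \<noteq> j \<Longrightarrow> p i t \<noteq> p j t"
  shows "(Phi N \<Omega> rd aI ah p v has_real_derivative - av * (\<Sum>i<N. v i t \<bullet> v i t)) (at t within {0..})"
proof -
  let ?g = "\<lambda>i j. gradVI aI rd (p i t - p j t)"
  let ?rate = "1/2 * (\<Sum>i<N. 2 * (v i t \<bullet> (- (\<Sum>j\<in>{..<N} - {i}. ?g i j) - gh i t - av *\<^sub>R v i t))
        + (\<Sum>j\<in>{..<N} - {i}. ?g i j \<bullet> (v i t - v j t)) + 2 * (gh i t \<bullet> v i t))"
  have "(Phi N \<Omega> rd aI ah p v has_real_derivative ?rate) (at t within {0..})"
    by (rule Phi_has_real_derivative) (use assms grad_h pos vel in auto)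
  moreover have "?rate = - av * (\<Sum>i<N. v i t \<bullet> v i t)"
  proof (rule energy_rate_antisym)
    show "?g j i = - ?g i j" for i j
      by (metis gradVI_minus minus_diff_eq)
  qed simp
  ultimately show ?thesis
    by simp
qed

lemma Phi_le_initial:
  assumes "0 \<le> av" "0 \<le> t"
    and distinct: "\<And>s i j. 0 < s \<Longrightarrow> s < t \<Longrightarrow> i < N \<Longrightarrow> j < N \<Longrightarrow> i \<noteq> j \<Longrightarrow> p i s \<noteq> p j s"
  shows "Phi N \<Omega> rd aI ah p v t \<le> Phi N \<Omega> rd aI ah p v 0"
proof (rule DERIV_nonpos_imp_decreasing_open[OF \<open>0 \<le> t\<close>])
  fix s
  assume s: "0 < s" "s < t"
  have "(Phi N \<Omega> rd aI ah p v has_real_derivative - av * (\<Sum>i<N. v i s \<bullet> v i s)) (at s within {0..})"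
    using s distinct by (intro Phi_has_real_derivative_dissipation) auto
  moreover have "at s within {0..} = at s"
    using s by (intro at_within_interior) auto
  moreover have "- av * (\<Sum>i<N. v i s \<bullet> v i s) \<le> 0"
    using \<open>0 \<le> av\<close> by (simp add: sum_nonneg)
  ultimately show "\<exists>y. (Phi N \<Omega> rd aI ah p v has_real_derivative y) (at s) \<and> y \<le> 0"
    by auto
next
  show "continuous_on {0..t} (Phi N \<Omega> rd aI ah p v)"
    using continuous_on_Phi by (rule continuous_on_subset) auto
qed

end

theorem proposition3:
  fixes \<Omega> :: "vec2 set" and rd aI ah av cr :: real and N :: nat
    and p v :: "nat \<Rightarrow> real \<Rightarrow> vec2"
    and gh :: "nat \<Rightarrow> real \<Rightarrow> vec2"
  assumes "compact \<Omega>" and "interior \<Omega> \<noteq> {}" and "connected (interior \<Omega>)"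
    and "\<Omega> = closure (interior \<Omega>)"
    and "rd > 0" and "aI > 0" and "ah > 0" and "av > 0" and "cr > 0"
    and grad_h: "\<And>i t. i < N \<Longrightarrow> t \<ge> 0 \<Longrightarrow>
        (Vh \<Omega> ah rd has_derivative (\<lambda>h. gh i t \<bullet> h)) (at (p i t))"
    and pos: "\<And>i t. i < N \<Longrightarrow> t \<ge> 0 \<Longrightarrow>
        (p i has_vector_derivative v i t) (at t within {0..})"
    and vel: "\<And>i t. i < N \<Longrightarrow> t \<ge> 0 \<Longrightarrow>
        (v i has_vector_derivative
           (- (\<Sum>j\<in>{..<N} - {i}. gradVI aI rd (p i t - p j t)) - gh i t - av *\<^sub>R v i t))
        (at t within {0..})"
    and init: "Phi N \<Omega> rd aI ah p v 0 < (LBINT s=ereal rd..ereal cr. fI aI rd s)"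
  shows "\<forall>t\<ge>0. \<forall>i<N. \<forall>j<N. i \<noteq> j \<longrightarrow> cr < norm (p i t - p j t)"
proof (rule ccontr)
  interpret damped_swarm \<Omega> rd aI ah av N p v gh
    using grad_h pos vel by unfold_locales
  assume "\<not> ?thesis"
  then obtain t i j where "0 \<le> t" "i < N" "j < N" "i \<noteq> j" "norm (p i t - p j t) \<le> cr"
    by (auto simp: not_less)
  then obtain t0 i0 j0 where collision: "0 \<le> t0" "i0 < N" "j0 < N" "i0 \<noteq> j0"
      "norm (p i0 t0 - p j0 t0) \<le> cr"
    and before: "\<And>s k l. 0 \<le> s \<Longrightarrow> s < t0 \<Longrightarrow> k < N \<Longrightarrow> l < N \<Longrightarrow> k \<noteq> l \<Longrightarrow>
      cr < norm (p k s - p l s)"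
    using first_collision_time[where p=p, OF continuous_on_position] by blast
  have "Phi N \<Omega> rd aI ah p v t0 \<le> Phi N \<Omega> rd aI ah p v 0"
  proof (rule Phi_le_initial)
    show "p k s \<noteq> p l s" if "0 < s" "s < t0" "k < N" "l < N" "k \<noteq> l" for s k l
      using before[of s k l] that \<open>cr > 0\<close> by auto
  qed (use collision \<open>av > 0\<close> in auto)
  moreover have "VI aI rd (p i0 t0 - p j0 t0) \<le> Phi N \<Omega> rd aI ah p v t0"
    by (rule VI_le_Phi) (use collision \<open>aI > 0\<close> \<open>ah > 0\<close> in auto)
  moreover have "VI_profile aI rd cr \<le> VI aI rd (p i0 t0 - p j0 t0)"
    unfolding VI_eq_profile_norm by (rule VI_profile_antimono) (use collision \<open>aI > 0\<close> in auto)
  ultimately show False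
    using init by (simp add: interval_integral_fI VI_profile_def)
qed

end
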